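(* Consider a market with $n$ buyers, $m$ items and $T$ time periods, where item $j$ has per-period supply $s_j^t\ge 0$ and overall supply $s_j\ge 0$. Every buyer has budget $B_i=1$ and binary valuations $v_{ij}\in\{0,1\}$, and buyer $i$ has per-period demands $d_i^t\ge0$ with $d_i=\sum_t d_i^t$. A feasible allocation is $x=(x_{ij}^t)\ge 0$ with $\sum_i x_{ij}^t\le s_j^t$ for all $j,t$ and $\sum_{t,i}x_{ij}^t\le s_j$ for all $j$; buyer $i$'s utility is $u_i(x_i)=\sum_j v_{ij}\sum_t x_{ij}^t-d_i$. Assume there is a feasible allocation with $u_i(x_i)>0$ for all $i$. Then the set of leximin-optimal feasible allocations coincides with the set of maximum Nash welfare allocations, i.e. the optimal solutions of $$\max_{x\ge 0}\sum_i\log\Big(\sum_j v_{ij}\sum_t x_{ij}^t-d_i\Big)\ \text{ over feasible allocations}.$$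
   Context: Leximin order: for $v,\tilde v\in\mathbb{R}^n$ with nondecreasing rearrangements $v^*,\tilde v^*$, $v$ is leximin-greater than $\tilde v$ if there is $k$ with $v^*_i=\tilde v^*_i$ for $i<k$ and $v^*_k>\tilde v^*_k$. A feasible allocation $x$ is leximin-optimal if no feasible $\tilde x$ has $(u_i(\tilde x_i))_i$ leximin-greater than $(u_i(x_i))_i$. *)

theory Defs
  imports Complex_Main
begin

text \<open>Buyers are indexed by i < n, items by j < m, periods by t < T.
  An allocation is x i j t. Per-period supply st j t, overall supply S j,
  valuations v i j, per-period demands dt i t.\<close>

definition leximin_greater :: "real list \<Rightarrow> real list \<Rightarrow> bool" where
  "leximin_greater a b \<longleftrightarrow>
     (let a' = sort a; b' = sort b in
       \<exists>k < length a'. (\<forall>i<k. a' ! i = b' ! i) \<and> a' ! k > b' ! k)"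

definition feasible ::
  "nat \<Rightarrow> nat \<Rightarrow> nat \<Rightarrow> (nat \<Rightarrow> nat \<Rightarrow> real) \<Rightarrow> (nat \<Rightarrow> real)
   \<Rightarrow> (nat \<Rightarrow> nat \<Rightarrow> nat \<Rightarrow> real) \<Rightarrow> bool" where
  "feasible n m T st S x \<longleftrightarrow>
     (\<forall>i<n. \<forall>j<m. \<forall>t<T. x i j t \<ge> 0) \<and>
     (\<forall>j<m. \<forall>t<T. (\<Sum>i<n. x i j t) \<le> st j t) \<and>
     (\<forall>j<m. (\<Sum>t<T. \<Sum>i<n. x i j t) \<le> S j)"

definition utility ::
  "nat \<Rightarrow> nat \<Rightarrow> (nat \<Rightarrow> nat \<Rightarrow> real) \<Rightarrow> (nat \<Rightarrow> nat \<Rightarrow> real)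
   \<Rightarrow> (nat \<Rightarrow> nat \<Rightarrow> nat \<Rightarrow> real) \<Rightarrow> nat \<Rightarrow> real" where
  "utility m T v dt x i = (\<Sum>j<m. v i j * (\<Sum>t<T. x i j t)) - (\<Sum>t<T. dt i t)"

definition utilities ::
  "nat \<Rightarrow> nat \<Rightarrow> nat \<Rightarrow> (nat \<Rightarrow> nat \<Rightarrow> real) \<Rightarrow> (nat \<Rightarrow> nat \<Rightarrow> real)
   \<Rightarrow> (nat \<Rightarrow> nat \<Rightarrow> nat \<Rightarrow> real) \<Rightarrow> real list" where
  "utilities n m T v dt x = map (utility m T v dt x) [0..<n]"

definition leximin_optimal where
  "leximin_optimal n m T st S v dt x \<longleftrightarrow>
     feasible n m T st S x \<and>
     \<not> (\<exists>y. feasible n m T st S y \<and>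
            leximin_greater (utilities n m T v dt y) (utilities n m T v dt x))"

text \<open>Maximum Nash welfare: maximize the sum of logs of utilities; the objective is
  -\<infinity> (log of a nonpositive number) unless all utilities are positive, so optimal
  solutions are feasible allocations with positive utilities maximizing the sum.\<close>
definition max_nash_welfare where
  "max_nash_welfare n m T st S v dt x \<longleftrightarrow>
     feasible n m T st S x \<and> (\<forall>i<n. utility m T v dt x i > 0) \<and>
     (\<forall>y. feasible n m T st S y \<and> (\<forall>i<n. utility m T v dt y i > 0) \<longrightarrow>
        (\<Sum>i<n. ln (utility m T v dt y i)) \<le> (\<Sum>i<n. ln (utility m T v dt x i)))"

end

theory Submission
  imports Defs "HOL-Library.Multiset"
begin

text \<open>Both problems are characterized by one condition on a feasible allocation \<open>x\<close>:
  every item that some buyer \<open>i\<close> values is allocated in the largest total amount that any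
  feasible allocation achieves, and only to buyers who value it and are no better off than \<open>i\<close>.
  If the condition fails, adding unused supply to \<open>i\<close>, or moving part of the item to \<open>i\<close>
  from a holder who does not value it or is strictly richer, either raises one utility or
  transfers utility from a richer to a poorer buyer without reversing their order; such a
  change improves both the leximin order and the Nash welfare.
  Conversely, under the condition, for every threshold \<open>c\<close> the buyers with utility at most
  \<open>c\<close> cannot together gain in any feasible allocation: with binary valuations their utility
  comes only from items they value, and all of these are saturated and held by them alone.
  Abel summation turns these inequalities into the maximality at \<open>x\<close> of \<open>\<Sum>i. log u\<^sub>i\<close>
  and of every truncated sum \<open>\<Sum>i. min u\<^sub>i c\<close>, and maximality of all truncated sums
  characterizes leximin optimality.\<close>

definition capped_sum :: "real \<Rightarrow> real list \<Rightarrow> real" where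
  "capped_sum c xs = sum_list (map (\<lambda>t. min t c) xs)"

lemma capped_sum_sort [simp]: "capped_sum c (sort xs) = capped_sum c xs"
  unfolding capped_sum_def by (metis mset_map mset_sort sum_mset_sum_list)

lemma capped_sum_conv_sum: "capped_sum c xs = (\<Sum>l<length xs. min (xs ! l) c)"
  unfolding capped_sum_def by (simp add: sum_list_sum_nth atLeast0LessThan)

lemma capped_sum_map_upt: "capped_sum c (map f [0..<n]) = (\<Sum>l<n. min (f l) c)"
  unfolding capped_sum_conv_sum by simp

lemma capped_sum_less_if_first_difference_less:
  assumes "sorted p" "sorted q" "length p = length q" "k < length p"
    and "\<forall>l<k. p ! l = q ! l" "p ! k < q ! k"
  shows "capped_sum (q ! k) p < capped_sum (q ! k) q"
proof -
  have "min (p ! l) (q ! k) \<le> min (q ! l) (q ! k)" if "l < length p" for l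
  proof (cases "l < k")
    case False
    then have "q ! k \<le> q ! l" using sorted_nth_mono[OF assms(2)] that assms(3) by simp
    then show ?thesis by simp
  qed (use assms in simp)
  moreover have "min (p ! k) (q ! k) < min (q ! k) (q ! k)" using assms(6) by simp
  ultimately have "(\<Sum>l<length p. min (p ! l) (q ! k)) < (\<Sum>l<length p. min (q ! l) (q ! k))"
    using assms(4) by (intro sum_strict_mono_ex1) auto
  then show ?thesis unfolding capped_sum_conv_sum using assms(3) by simp
qed

lemma leximin_greater_imp_capped_sum_less:
  assumes "leximin_greater b a" "length a = length b"
  shows "\<exists>c. capped_sum c a < capped_sum c b"
proof -
  obtain k where "k < length (sort b)" "\<forall>l<k. sort b ! l = sort a ! l" "sort a ! k < sort b ! k"
    using assms(1) unfolding leximin_greater_def Let_def by blast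
  then have "capped_sum (sort b ! k) (sort a) < capped_sum (sort b ! k) (sort b)"
    using assms(2) by (intro capped_sum_less_if_first_difference_less) auto
  then show ?thesis by auto
qed

lemma leximin_greaterI_capped_sum:
  assumes "length a = length b"
    and "\<forall>c. capped_sum c a \<le> capped_sum c b" "\<exists>c. capped_sum c a < capped_sum c b"
  shows "leximin_greater b a"
proof -
  define a' b' where "a' = sort a" and "b' = sort b"
  have len: "length a' = length b'" using assms(1) by (simp add: a'_def b'_def)
  have "a' \<noteq> b'"
    using assms(3) capped_sum_sort unfolding a'_def b'_def by (metis order.irrefl)
  then have "\<exists>l. l < length b' \<and> b' ! l \<noteq> a' ! l"
    using len nth_equalityI by metis
  then obtain k where k: "k < length b'" "b' ! k \<noteq> a' ! k"
    and prefix: "\<forall>l<k. b' ! l = a' ! l"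
    using exists_least_iff[of "\<lambda>l. l < length b' \<and> b' ! l \<noteq> a' ! l"]
    by (metis less_trans)
  have "\<not> b' ! k < a' ! k"
  proof
    assume "b' ! k < a' ! k"
    then have "capped_sum (a' ! k) b' < capped_sum (a' ! k) a'"
      using k prefix len
      by (intro capped_sum_less_if_first_difference_less) (auto simp: a'_def b'_def)
    then show False using assms(2) unfolding a'_def b'_def by (metis capped_sum_sort not_le)
  qed
  then have "a' ! k < b' ! k" using k(2) by linarith
  then show ?thesis
    unfolding leximin_greater_def Let_def a'_def[symmetric] b'_def[symmetric] using k prefix by auto
qed

text \<open>Abel summation: a nonnegative weight that is antitone in \<open>a\<close> is a nonnegative
  combination of indicator functions of the lower sets of \<open>a\<close>.\<close>
lemma sum_weighted_nonpos_if_lower_sums_nonpos: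
  fixes a f w :: "'a \<Rightarrow> real"
  assumes "finite I" "\<forall>k\<in>I. (\<Sum>i\<in>{i\<in>I. a i \<le> a k}. f i) \<le> 0"
    "\<forall>i\<in>I. w i \<ge> 0" "\<forall>i\<in>I. \<forall>k\<in>I. a i \<le> a k \<longrightarrow> w k \<le> w i"
  shows "(\<Sum>i\<in>I. w i * f i) \<le> 0"
  using assms
proof (induction "card I" arbitrary: I w rule: less_induct)
  case less
  show ?case
  proof (cases "I = {}")
    case False
    obtain M where M: "M \<in> I" "\<forall>i\<in>I. a i \<le> a M"
      using Max_in[of "a ` I"] Max_ge[of "a ` I"] less.prems(1) False by fastforce
    define I' where "I' = {i\<in>I. a i < a M}"
    have "card I' < card I"
      using M(1) less.prems(1) by (intro psubset_card_mono) (auto simp: I'_def)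
    moreover have "{i\<in>I'. a i \<le> a k} = {i\<in>I. a i \<le> a k}" if "k \<in> I'" for k
      using that by (auto simp: I'_def)
    ultimately have IH: "(\<Sum>i\<in>I'. (w i - w M) * f i) \<le> 0"
      using less.prems M by (intro less.hyps) (auto simp: I'_def)
    have "{i\<in>I. a i \<le> a M} = I" using M by auto
    then have "(\<Sum>i\<in>I. f i) \<le> 0" using less.prems(2) M(1) by metis
    then have top: "w M * (\<Sum>i\<in>I. f i) \<le> 0"
      using less.prems(3) M(1) by (simp add: mult_nonneg_nonpos)
    have "w i = w M" if "i \<in> I - I'" for i
    proof -
      have "i \<in> I" "a i = a M" using that M by (auto simp: I'_def)
      then show ?thesis using less.prems(4) M(1) by (metis order.refl order.antisym)
    qed
    then have "(\<Sum>i\<in>I. (w i - w M) * f i) = (\<Sum>i\<in>I'. (w i - w M) * f i)"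
      using less.prems(1) by (intro sum.mono_neutral_right) (auto simp: I'_def)
    moreover have "(\<Sum>i\<in>I. w i * f i) = (\<Sum>i\<in>I. (w i - w M) * f i) + w M * (\<Sum>i\<in>I. f i)"
      by (simp add: algebra_simps sum.distrib sum_distrib_left sum_subtractf)
    ultimately show ?thesis using IH top by linarith
  qed simp
qed

definition elementary_improvement :: "nat \<Rightarrow> (nat \<Rightarrow> real) \<Rightarrow> (nat \<Rightarrow> real) \<Rightarrow> bool" where
  "elementary_improvement n a b \<longleftrightarrow>
     (\<exists>i<n. \<exists>\<epsilon>>0. \<forall>l<n. b l = a l + (if l = i then \<epsilon> else 0)) \<or>
     (\<exists>i<n. \<exists>k<n. \<exists>\<epsilon>>0. i \<noteq> k \<and> 2 * \<epsilon> \<le> a k - a i \<and>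
        (\<forall>l<n. b l = a l + (if l = i then \<epsilon> else if l = k then - \<epsilon> else 0)))"

lemma sum_diff_raise_one:
  fixes a b :: "nat \<Rightarrow> real" and g :: "real \<Rightarrow> real"
  assumes "i < n" "\<forall>l<n. b l = a l + (if l = i then \<epsilon> else 0)"
  shows "(\<Sum>l<n. g (b l)) - (\<Sum>l<n. g (a l)) = g (a i + \<epsilon>) - g (a i)"
proof -
  have "(\<Sum>l<n. g (b l)) - (\<Sum>l<n. g (a l)) = (\<Sum>l<n. g (b l) - g (a l))"
    by (simp add: sum_subtractf)
  also have "\<dots> = (\<Sum>l<n. if l = i then g (a i + \<epsilon>) - g (a i) else 0)"
    using assms(2) by (intro sum.cong) auto
  finally show ?thesis using assms(1) by simp
qed

lemma sum_diff_transfer: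
  fixes a b :: "nat \<Rightarrow> real" and g :: "real \<Rightarrow> real"
  assumes "i < n" "k < n" "i \<noteq> k"
    and "\<forall>l<n. b l = a l + (if l = i then \<epsilon> else if l = k then - \<epsilon> else 0)"
  shows "(\<Sum>l<n. g (b l)) - (\<Sum>l<n. g (a l))
       = (g (a i + \<epsilon>) - g (a i)) + (g (a k - \<epsilon>) - g (a k))"
proof -
  have "(\<Sum>l<n. g (b l)) - (\<Sum>l<n. g (a l)) = (\<Sum>l<n. g (b l) - g (a l))"
    by (simp add: sum_subtractf)
  also have "\<dots> = (\<Sum>l<n. (if l = i then g (a i + \<epsilon>) - g (a i) else 0)
                         + (if l = k then g (a k - \<epsilon>) - g (a k) else 0))"
    using assms(3,4) by (intro sum.cong) auto
  finally show ?thesis using assms(1,2) by (simp add: sum.distrib)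
qed

lemma elementary_improvement_capped_sums:
  assumes "elementary_improvement n a b"
  shows "(\<forall>c. (\<Sum>l<n. min (a l) c) \<le> (\<Sum>l<n. min (b l) c)) \<and>
    (\<exists>c. (\<Sum>l<n. min (a l) c) < (\<Sum>l<n. min (b l) c))"
  using assms unfolding elementary_improvement_def
proof (elim disjE exE conjE)
  fix i \<epsilon> assume i: "i < n" and \<epsilon>: "\<epsilon> > 0"
    and b: "\<forall>l<n. b l = a l + (if l = i then \<epsilon> else 0)"
  note diff = sum_diff_raise_one[OF i b, of "\<lambda>t. min t c" for c]
  show ?thesis
    using diff diff[of "a i + \<epsilon>"] \<epsilon> by (smt (verit, best))
next
  fix i k \<epsilon> assume i: "i < n" and k: "k < n" and \<epsilon>: "\<epsilon> > 0" and ik: "i \<noteq> k"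
    and gap: "2 * \<epsilon> \<le> a k - a i"
    and b: "\<forall>l<n. b l = a l + (if l = i then \<epsilon> else if l = k then - \<epsilon> else 0)"
  note diff = sum_diff_transfer[OF i k ik b, of "\<lambda>t. min t c" for c]
  show ?thesis
    using diff diff[of "a i + \<epsilon>"] \<epsilon> gap by (smt (verit, best))
qed

lemma elementary_improvement_leximin_greater:
  assumes "elementary_improvement n a b"
  shows "leximin_greater (map b [0..<n]) (map a [0..<n])"
  using elementary_improvement_capped_sums[OF assms]
  by (intro leximin_greaterI_capped_sum) (simp_all add: capped_sum_map_upt)

lemma elementary_improvement_ln_sum_less:
  assumes "elementary_improvement n a b" "\<forall>l<n. a l > 0"
  shows "(\<forall>l<n. b l > 0) \<and> (\<Sum>l<n. ln (a l)) < (\<Sum>l<n. ln (b l))"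
  using assms unfolding elementary_improvement_def
proof (elim disjE exE conjE)
  fix i \<epsilon> assume i: "i < n" and \<epsilon>: "\<epsilon> > 0"
    and b: "\<forall>l<n. b l = a l + (if l = i then \<epsilon> else 0)"
  have "a i > 0" using assms(2) i by simp
  then have "ln (a i) < ln (a i + \<epsilon>)" using \<epsilon> by simp
  moreover have "\<forall>l<n. b l > 0" using b \<epsilon> assms(2) by (smt (verit))
  ultimately show ?thesis using sum_diff_raise_one[OF i b, of ln] by auto
next
  fix i k \<epsilon> assume i: "i < n" and k: "k < n" and \<epsilon>: "\<epsilon> > 0" and ik: "i \<noteq> k"
    and gap: "2 * \<epsilon> \<le> a k - a i"
    and b: "\<forall>l<n. b l = a l + (if l = i then \<epsilon> else if l = k then - \<epsilon> else 0)"
  have ai: "a i > 0" and ak: "a k - \<epsilon> > 0" using assms(2) i \<epsilon> gap by auto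
  have "a i * a k < (a i + \<epsilon>) * (a k - \<epsilon>)"
  proof -
    have "(a i + \<epsilon>) * (a k - \<epsilon>) - a i * a k = \<epsilon> * (a k - a i - \<epsilon>)"
      by (simp add: algebra_simps)
    moreover have "\<epsilon> * (a k - a i - \<epsilon>) > 0" using \<epsilon> gap by simp
    ultimately show ?thesis by linarith
  qed
  then have "ln (a i * a k) < ln ((a i + \<epsilon>) * (a k - \<epsilon>))"
    using ai ak \<epsilon> by simp
  then have "ln (a i) + ln (a k) < ln (a i + \<epsilon>) + ln (a k - \<epsilon>)"
    using ai ak \<epsilon> by (simp add: ln_mult)
  moreover have "\<forall>l<n. b l > 0" using b \<epsilon> assms(2) ak by (smt (verit))
  ultimately show ?thesis using sum_diff_transfer[OF i k ik b, of ln] by auto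
qed

definition item_total :: "nat \<Rightarrow> nat \<Rightarrow> (nat \<Rightarrow> nat \<Rightarrow> nat \<Rightarrow> real) \<Rightarrow> nat \<Rightarrow> real" where
  "item_total n T x j = (\<Sum>t<T. \<Sum>k<n. x k j t)"

definition add_on_item ::
  "nat \<Rightarrow> (nat \<Rightarrow> nat \<Rightarrow> real) \<Rightarrow> (nat \<Rightarrow> nat \<Rightarrow> nat \<Rightarrow> real) \<Rightarrow> nat \<Rightarrow> nat \<Rightarrow> nat \<Rightarrow> real"
  where "add_on_item j e x = (\<lambda>i j' t. x i j' t + (if j' = j then e i t else 0))"

definition transfer_item ::
  "nat \<Rightarrow> nat \<Rightarrow> nat \<Rightarrow> real \<Rightarrow> (nat \<Rightarrow> nat \<Rightarrow> nat \<Rightarrow> real) \<Rightarrow> nat \<Rightarrow> nat \<Rightarrow> nat \<Rightarrow> real"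
  where "transfer_item k i j \<theta> x =
    add_on_item j (\<lambda>a t. if a = i then \<theta> * x k j t else if a = k then - (\<theta> * x k j t) else 0) x"

lemma feasible_holding_nonneg:
  assumes "feasible n m T st S x" "i < n" "j < m"
  shows "(\<Sum>t<T. x i j t) \<ge> 0"
  using assms unfolding feasible_def by (auto intro: sum_nonneg)

lemma utility_add_on_item:
  assumes "j < m"
  shows "utility m T v dt (add_on_item j e x) i = utility m T v dt x i + v i j * (\<Sum>t<T. e i t)"
proof -
  have "(\<Sum>j'<m. v i j' * (\<Sum>t<T. x i j' t + (if j' = j then e i t else 0)))
      = (\<Sum>j'<m. v i j' * (\<Sum>t<T. x i j' t) + (if j' = j then v i j * (\<Sum>t<T. e i t) else 0))"
    by (intro sum.cong) (auto simp: sum.distrib algebra_simps)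
  then show ?thesis using assms by (simp add: utility_def add_on_item_def sum.distrib)
qed

lemma feasible_add_on_item:
  assumes "feasible n m T st S x" "j < m"
    and "\<forall>i<n. \<forall>t<T. x i j t + e i t \<ge> 0"
    and "\<forall>t<T. (\<Sum>i<n. x i j t + e i t) \<le> st j t"
    and "(\<Sum>t<T. \<Sum>i<n. x i j t + e i t) \<le> S j"
  shows "feasible n m T st S (add_on_item j e x)"
proof -
  have on_j: "add_on_item j e x i j t = x i j t + e i t" for i t
    by (simp add: add_on_item_def)
  have off_j: "add_on_item j e x i j' t = x i j' t" if "j' \<noteq> j" for i j' t
    using that by (simp add: add_on_item_def)
  show ?thesis
    unfolding feasible_def
  proof (intro conjI allI impI)
    fix i j' t assume "i < n" "j' < m" "t < T"
    then show "add_on_item j e x i j' t \<ge> 0"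
      using assms by (cases "j' = j") (auto simp: on_j off_j feasible_def)
  next
    fix j' t assume "j' < m" "t < T"
    then show "(\<Sum>i<n. add_on_item j e x i j' t) \<le> st j' t"
      using assms by (cases "j' = j") (auto simp: on_j off_j feasible_def)
  next
    fix j' assume "j' < m"
    then show "(\<Sum>t<T. \<Sum>i<n. add_on_item j e x i j' t) \<le> S j'"
      using assms by (cases "j' = j") (auto simp: on_j off_j feasible_def)
  qed
qed

lemma
  assumes "feasible n m T st S x" "i < n" "k < n" "i \<noteq> k" "j < m" "0 \<le> \<theta>" "\<theta> \<le> 1"
  shows feasible_transfer_item: "feasible n m T st S (transfer_item k i j \<theta> x)"
    and utility_transfer_item: "utility m T v dt (transfer_item k i j \<theta> x) l
      = utility m T v dt x l + v l j * (if l = i then \<theta> * (\<Sum>t<T. x k j t)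
          else if l = k then - (\<theta> * (\<Sum>t<T. x k j t)) else 0)"
proof -
  define e where "e a t = (if a = i then \<theta> * x k j t else if a = k then - (\<theta> * x k j t) else 0)"
    for a t
  have "(\<Sum>a<n. e a t) = 0" for t
  proof -
    have "(\<Sum>a<n. e a t)
        = (\<Sum>a<n. (if a = i then \<theta> * x k j t else 0) + (if a = k then - (\<theta> * x k j t) else 0))"
      using assms(4) by (intro sum.cong) (auto simp: e_def)
    then show ?thesis using assms(2,3) by (simp add: sum.distrib)
  qed
  then have same_totals: "(\<Sum>a<n. x a j t + e a t) = (\<Sum>a<n. x a j t)" for t
    by (simp add: sum.distrib)
  have "x a j t + e a t \<ge> 0" if "a < n" "t < T" for a t
  proof -
    have "x a j t \<ge> 0" "x k j t \<ge> 0" using assms that unfolding feasible_def by auto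
    then show ?thesis using assms(6,7) by (auto simp: e_def mult_left_le_one_le)
  qed
  then show "feasible n m T st S (transfer_item k i j \<theta> x)"
    unfolding transfer_item_def e_def[symmetric] using assms(1,5)
    by (intro feasible_add_on_item) (auto simp: same_totals feasible_def)
  have "(\<Sum>t<T. e l t) = (if l = i then \<theta> * (\<Sum>t<T. x k j t)
          else if l = k then - (\<theta> * (\<Sum>t<T. x k j t)) else 0)"
    by (simp add: e_def sum_distrib_left sum_negf)
  then show "utility m T v dt (transfer_item k i j \<theta> x) l
      = utility m T v dt x l + v l j * (if l = i then \<theta> * (\<Sum>t<T. x k j t)
          else if l = k then - (\<theta> * (\<Sum>t<T. x k j t)) else 0)"
    unfolding transfer_item_def e_def[symmetric] using utility_add_on_item[OF assms(5)] by simp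
qed

locale binary_market =
  fixes n m T :: nat and st :: "nat \<Rightarrow> nat \<Rightarrow> real" and S :: "nat \<Rightarrow> real"
    and v :: "nat \<Rightarrow> nat \<Rightarrow> real" and dt :: "nat \<Rightarrow> nat \<Rightarrow> real"
  assumes v_binary: "i < n \<Longrightarrow> j < m \<Longrightarrow> v i j = 0 \<or> v i j = 1"
begin

abbreviation feas :: "(nat \<Rightarrow> nat \<Rightarrow> nat \<Rightarrow> real) \<Rightarrow> bool"
  where "feas \<equiv> feasible n m T st S"

abbreviation util :: "(nat \<Rightarrow> nat \<Rightarrow> nat \<Rightarrow> real) \<Rightarrow> nat \<Rightarrow> real"
  where "util \<equiv> utility m T v dt"

definition saturated_and_fair :: "(nat \<Rightarrow> nat \<Rightarrow> nat \<Rightarrow> real) \<Rightarrow> bool" where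
  "saturated_and_fair x \<longleftrightarrow> (\<forall>i<n. \<forall>j<m. v i j = 1 \<longrightarrow>
     (\<forall>y. feas y \<longrightarrow> item_total n T y j \<le> item_total n T x j) \<and>
     (\<forall>k<n. (\<Sum>t<T. x k j t) > 0 \<longrightarrow> v k j = 1 \<and> util x k \<le> util x i))"

lemma improvement_if_unsaturated:
  assumes fx: "feas x" and fz: "feas z" and i: "i < n" and j: "j < m" and vij: "v i j = 1"
    and unsaturated: "item_total n T x j < item_total n T z j"
  shows "\<exists>y. feas y \<and> elementary_improvement n (util x) (util y)"
proof -
  define \<delta> where "\<delta> t = (\<Sum>k<n. z k j t) - (\<Sum>k<n. x k j t)" for t
  define D where "D = (\<Sum>t<T. \<delta> t)"
  define P where "P = (\<Sum>t<T. max (\<delta> t) 0)"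
  have D_eq: "D = item_total n T z j - item_total n T x j"
    by (simp add: D_def \<delta>_def item_total_def sum_subtractf)
  then have "D > 0" using unsaturated by simp
  moreover have "D \<le> P" unfolding D_def P_def by (intro sum_mono) simp
  ultimately have "P > 0" by simp
  define \<theta> where "\<theta> = D / P"
  have \<theta>: "0 < \<theta>" "\<theta> \<le> 1" and \<theta>P: "\<theta> * P = D"
    using \<open>D > 0\<close> \<open>D \<le> P\<close> \<open>P > 0\<close> by (auto simp: \<theta>_def)
  \<comment> \<open>Buyer \<open>i\<close> gets the same fraction of the positive part of \<open>\<delta>\<close> in every period;
    this respects the per-period supplies and adds exactly \<open>D\<close> in total.\<close>
  define e where "e a t = (if a = i then \<theta> * max (\<delta> t) 0 else 0)" for a t
  have e_sum: "(\<Sum>a<n. x a j t + e a t) = (\<Sum>a<n. x a j t) + \<theta> * max (\<delta> t) 0" for t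
    using i by (simp add: sum.distrib e_def)
  have "feas (add_on_item j e x)"
  proof (rule feasible_add_on_item[OF fx j])
    have "\<theta> * max (\<delta> t) 0 \<ge> 0" for t using \<theta> by simp
    then show "\<forall>a<n. \<forall>t<T. 0 \<le> x a j t + e a t"
      using fx j unfolding feasible_def e_def by (simp add: add_nonneg_nonneg)
    show "\<forall>t<T. (\<Sum>a<n. x a j t + e a t) \<le> st j t"
    proof (intro allI impI)
      fix t assume t: "t < T"
      have "(\<Sum>k<n. z k j t) \<le> st j t" "(\<Sum>k<n. x k j t) \<le> st j t"
        using fz fx j t unfolding feasible_def by auto
      moreover have "\<theta> * max (\<delta> t) 0 \<le> max (\<delta> t) 0"
        using \<theta> by (simp add: mult_left_le_one_le)
      ultimately show "(\<Sum>a<n. x a j t + e a t) \<le> st j t"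
        unfolding e_sum \<delta>_def by linarith
    qed
    have "(\<Sum>t<T. \<Sum>a<n. x a j t + e a t) = (\<Sum>t<T. (\<Sum>a<n. x a j t) + \<theta> * max (\<delta> t) 0)"
      by (simp only: e_sum)
    also have "\<dots> = item_total n T x j + D"
      using \<theta>P by (simp add: sum.distrib item_total_def P_def sum_distrib_left)
    also have "\<dots> = item_total n T z j" using D_eq by simp
    finally show "(\<Sum>t<T. \<Sum>a<n. x a j t + e a t) \<le> S j"
      using fz j unfolding feasible_def item_total_def by auto
  qed
  moreover have "util (add_on_item j e x) l = util x l + (if l = i then D else 0)" for l
    using \<theta>P vij by (simp add: utility_add_on_item[OF j] e_def P_def sum_distrib_left[symmetric])
  ultimately show ?thesis
    using i \<open>D > 0\<close> unfolding elementary_improvement_def by blast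
qed

lemma improvement_if_misallocated:
  assumes fx: "feas x" and i: "i < n" and k: "k < n" and j: "j < m"
    and vij: "v i j = 1" and vkj: "v k j \<noteq> 1" and holds: "(\<Sum>t<T. x k j t) > 0"
  shows "\<exists>y. feas y \<and> elementary_improvement n (util x) (util y)"
proof -
  have "v k j = 0" using v_binary[OF k j] vkj by simp
  moreover have ik: "i \<noteq> k" using vij vkj by auto
  ultimately have "\<forall>l<n. util (transfer_item k i j 1 x) l
      = util x l + (if l = i then (\<Sum>t<T. x k j t) else 0)"
    using utility_transfer_item[OF fx i k ik j, of 1] vij by simp
  then have "elementary_improvement n (util x) (util (transfer_item k i j 1 x))"
    using i holds unfolding elementary_improvement_def by blast
  then show ?thesis using feasible_transfer_item[OF fx i k ik j, of 1] by auto
qed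

lemma improvement_if_richer_holder:
  assumes fx: "feas x" and i: "i < n" and k: "k < n" and j: "j < m"
    and vij: "v i j = 1" and vkj: "v k j = 1" and holds: "(\<Sum>t<T. x k j t) > 0"
    and richer: "util x i < util x k"
  shows "\<exists>y. feas y \<and> elementary_improvement n (util x) (util y)"
proof -
  define X where "X = (\<Sum>t<T. x k j t)"
  define \<theta> where "\<theta> = min 1 ((util x k - util x i) / (2 * X))"
  have ik: "i \<noteq> k" using richer by auto
  have X: "X > 0" using holds by (simp add: X_def)
  then have \<theta>: "0 < \<theta>" "\<theta> \<le> 1" using richer by (auto simp: \<theta>_def)
  have "\<theta> * X \<le> (util x k - util x i) / (2 * X) * X"
    using X by (intro mult_right_mono) (auto simp: \<theta>_def)
  then have gap: "2 * (\<theta> * X) \<le> util x k - util x i" using X by simp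
  have "\<forall>l<n. util (transfer_item k i j \<theta> x) l
      = util x l + (if l = i then \<theta> * X else if l = k then - (\<theta> * X) else 0)"
    using utility_transfer_item[OF fx i k ik j, of \<theta>] \<theta> vij vkj by (simp add: X_def)
  moreover have "\<theta> * X > 0" using \<theta> X by simp
  ultimately have "elementary_improvement n (util x) (util (transfer_item k i j \<theta> x))"
    using i k ik gap unfolding elementary_improvement_def by blast
  then show ?thesis using feasible_transfer_item[OF fx i k ik j, of \<theta>] \<theta> by auto
qed

lemma improvement_if_not_saturated_and_fair:
  assumes "feas x" "\<not> saturated_and_fair x"
  shows "\<exists>y. feas y \<and> elementary_improvement n (util x) (util y)"
proof -
  obtain i j where ij: "i < n" "j < m" "v i j = 1" and
    "(\<exists>z. feas z \<and> item_total n T x j < item_total n T z j)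
      \<or> (\<exists>k<n. (\<Sum>t<T. x k j t) > 0 \<and> (v k j \<noteq> 1 \<or> util x i < util x k))"
    using assms(2) unfolding saturated_and_fair_def by (auto simp: not_le)
  then show ?thesis
    using improvement_if_unsaturated improvement_if_misallocated improvement_if_richer_holder
      assms(1) by metis
qed

definition valued_items :: "nat set \<Rightarrow> nat set" where
  "valued_items A = {j\<in>{..<m}. \<exists>i\<in>A. v i j = 1}"

lemma sum_valuations_restrict_valued_items:
  assumes "A \<subseteq> {..<n}"
  shows "(\<Sum>i\<in>A. \<Sum>j<m. v i j * h i j) = (\<Sum>j\<in>valued_items A. \<Sum>i\<in>A. v i j * h i j)"
proof -
  have "v i j = 0" if "j \<in> {..<m} - valued_items A" "i \<in> A" for i j
    using that assms v_binary unfolding valued_items_def by blast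
  then have "(\<Sum>j<m. \<Sum>i\<in>A. v i j * h i j) = (\<Sum>j\<in>valued_items A. \<Sum>i\<in>A. v i j * h i j)"
    by (intro sum.mono_neutral_right) (auto simp: valued_items_def)
  then show ?thesis by (simp add: sum.swap[of _ A])
qed

lemma valued_bundles_le_item_totals:
  assumes fy: "feas y" and A: "A \<subseteq> {..<n}"
  shows "(\<Sum>i\<in>A. \<Sum>j<m. v i j * (\<Sum>t<T. y i j t))
    \<le> (\<Sum>j\<in>valued_items A. item_total n T y j)"
  unfolding sum_valuations_restrict_valued_items[OF A]
proof (intro sum_mono)
  fix j assume "j \<in> valued_items A"
  then have j: "j < m" by (simp add: valued_items_def)
  have "(\<Sum>i\<in>A. v i j * (\<Sum>t<T. y i j t)) \<le> (\<Sum>i\<in>A. \<Sum>t<T. y i j t)"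
  proof (intro sum_mono)
    fix i assume "i \<in> A"
    then have i: "i < n" using A by auto
    show "v i j * (\<Sum>t<T. y i j t) \<le> (\<Sum>t<T. y i j t)"
      using v_binary[OF i j] feasible_holding_nonneg[OF fy i j] by auto
  qed
  also have "\<dots> \<le> (\<Sum>i<n. \<Sum>t<T. y i j t)"
    using A feasible_holding_nonneg[OF fy _ j] by (intro sum_mono2) auto
  also have "\<dots> = item_total n T y j" unfolding item_total_def by (rule sum.swap)
  finally show "(\<Sum>i\<in>A. v i j * (\<Sum>t<T. y i j t)) \<le> item_total n T y j" .
qed

lemma saturated_and_fair_valued_bundles_eq_item_totals:
  assumes fx: "feas x" and sf: "saturated_and_fair x" and A: "A = {i\<in>{..<n}. util x i \<le> c}"
  shows "(\<Sum>i\<in>A. \<Sum>j<m. v i j * (\<Sum>t<T. x i j t))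
    = (\<Sum>j\<in>valued_items A. item_total n T x j)"
proof -
  have A_sub: "A \<subseteq> {..<n}" using A by auto
  have "(\<Sum>i\<in>A. v i j * (\<Sum>t<T. x i j t)) = item_total n T x j"
    if valued: "j \<in> valued_items A" for j
  proof -
    obtain i0 where i0: "i0 \<in> A" "v i0 j = 1" and j: "j < m" using valued
      by (auto simp: valued_items_def)
    have "i0 < n" using i0(1) A_sub by auto
    then have holders: "\<forall>k<n. (\<Sum>t<T. x k j t) > 0 \<longrightarrow> v k j = 1 \<and> util x k \<le> util x i0"
      using sf j i0(2) unfolding saturated_and_fair_def by blast
    have "(if i \<in> A then v i j * (\<Sum>t<T. x i j t) else 0) = (\<Sum>t<T. x i j t)" if "i < n" for i
    proof (cases "(\<Sum>t<T. x i j t) > 0")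
      case True
      then have "v i j = 1" "util x i \<le> util x i0" using holders that by auto
      moreover have "util x i0 \<le> c" using i0(1) A by simp
      ultimately show ?thesis using A that by simp
    next
      case False
      then show ?thesis using feasible_holding_nonneg[OF fx that j] by auto
    qed
    then have "(\<Sum>i<n. if i \<in> A then v i j * (\<Sum>t<T. x i j t) else 0) = (\<Sum>i<n. \<Sum>t<T. x i j t)"
      by (intro sum.cong) auto
    moreover have "(\<Sum>i<n. if i \<in> A then v i j * (\<Sum>t<T. x i j t) else 0)
        = (\<Sum>i\<in>A. v i j * (\<Sum>t<T. x i j t))"
      using A_sub by (simp add: sum.inter_restrict[symmetric] Int_absorb1)
    moreover have "item_total n T x j = (\<Sum>i<n. \<Sum>t<T. x i j t)"
      unfolding item_total_def by (rule sum.swap)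
    ultimately show ?thesis by simp
  qed
  then show ?thesis
    unfolding sum_valuations_restrict_valued_items[OF A_sub] by (intro sum.cong) auto
qed

lemma saturated_and_fair_lower_set_sum_ge:
  assumes fx: "feas x" and sf: "saturated_and_fair x" and fy: "feas y"
  shows "(\<Sum>i\<in>{i\<in>{..<n}. util x i \<le> c}. util y i)
    \<le> (\<Sum>i\<in>{i\<in>{..<n}. util x i \<le> c}. util x i)"
proof -
  define A where "A = {i\<in>{..<n}. util x i \<le> c}"
  have "(\<Sum>i\<in>A. \<Sum>j<m. v i j * (\<Sum>t<T. y i j t)) \<le> (\<Sum>j\<in>valued_items A. item_total n T y j)"
    by (rule valued_bundles_le_item_totals[OF fy]) (auto simp: A_def)
  also have "\<dots> \<le> (\<Sum>j\<in>valued_items A. item_total n T x j)"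
  proof (intro sum_mono)
    fix j assume "j \<in> valued_items A"
    then obtain i where "i \<in> A" "j < m" "v i j = 1" by (auto simp: valued_items_def)
    then show "item_total n T y j \<le> item_total n T x j"
      using sf fy unfolding saturated_and_fair_def A_def by auto
  qed
  also have "\<dots> = (\<Sum>i\<in>A. \<Sum>j<m. v i j * (\<Sum>t<T. x i j t))"
    by (rule saturated_and_fair_valued_bundles_eq_item_totals[OF fx sf A_def, symmetric])
  finally show ?thesis
    unfolding A_def[symmetric] by (simp add: utility_def sum_subtractf)
qed

lemma saturated_and_fair_capped_sum_ge:
  assumes "feas x" "saturated_and_fair x" "feas y"
  shows "(\<Sum>i<n. min (util y i) c) \<le> (\<Sum>i<n. min (util x i) c)"
proof -
  define w :: "nat \<Rightarrow> real" where "w i = (if util x i \<le> c then 1 else 0)" for i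
  have "(\<Sum>i<n. w i * (util y i - util x i)) \<le> 0"
  proof (rule sum_weighted_nonpos_if_lower_sums_nonpos)
    show "\<forall>k\<in>{..<n}. (\<Sum>i\<in>{i\<in>{..<n}. util x i \<le> util x k}. util y i - util x i) \<le> 0"
      using saturated_and_fair_lower_set_sum_ge[OF assms] by (simp add: sum_subtractf)
  qed (auto simp: w_def)
  moreover have "min (util y i) c - min (util x i) c \<le> w i * (util y i - util x i)" for i
    by (auto simp: w_def min_def)
  then have "(\<Sum>i<n. min (util y i) c - min (util x i) c) \<le> (\<Sum>i<n. w i * (util y i - util x i))"
    by (intro sum_mono)
  ultimately show ?thesis by (simp add: sum_subtractf)
qed

lemma saturated_and_fair_ln_sum_ge:
  assumes "feas x" "saturated_and_fair x" "feas y"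
    and x_pos: "\<forall>i<n. util x i > 0" and y_pos: "\<forall>i<n. util y i > 0"
  shows "(\<Sum>i<n. ln (util y i)) \<le> (\<Sum>i<n. ln (util x i))"
proof -
  define w where "w i = 1 / util x i" for i
  have "(\<Sum>i<n. w i * (util y i - util x i)) \<le> 0"
    using saturated_and_fair_lower_set_sum_ge[OF assms(1-3)] x_pos
    by (intro sum_weighted_nonpos_if_lower_sums_nonpos)
      (auto simp: w_def sum_subtractf less_imp_le intro!: divide_left_mono)
  moreover have "ln (util y i) - ln (util x i) \<le> w i * (util y i - util x i)" if "i < n" for i
  proof -
    have x: "util x i > 0" and y: "util y i > 0" using x_pos y_pos that by auto
    then have "ln (util y i) - ln (util x i) = ln (util y i / util x i)" by (simp add: ln_div)
    also have "\<dots> \<le> util y i / util x i - 1" using x y by (intro ln_le_minus_one) simp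
    also have "\<dots> = w i * (util y i - util x i)" using x by (simp add: w_def field_simps)
    finally show ?thesis .
  qed
  then have "(\<Sum>i<n. ln (util y i) - ln (util x i)) \<le> (\<Sum>i<n. w i * (util y i - util x i))"
    by (intro sum_mono) simp
  ultimately show ?thesis by (simp add: sum_subtractf)
qed

lemma saturated_and_fair_utility_pos:
  assumes fx: "feas x" and sf: "saturated_and_fair x" and fz: "feas z"
    and z_pos: "\<forall>i<n. util z i > 0"
  shows "\<forall>i<n. util x i > 0"
proof (rule ccontr)
  assume "\<not> ?thesis"
  then obtain i where i: "i < n" "util x i \<le> 0" by (auto simp: not_less)
  define A where "A = {l\<in>{..<n}. util x l \<le> util x i}"
  have "0 < (\<Sum>l\<in>A. util z l)"
    using i z_pos by (intro sum_pos2[of _ i]) (auto simp: A_def less_imp_le)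
  also have "\<dots> \<le> (\<Sum>l\<in>A. util x l)"
    unfolding A_def by (rule saturated_and_fair_lower_set_sum_ge[OF fx sf fz])
  also have "\<dots> \<le> 0"
    using i by (intro sum_nonpos) (auto simp: A_def)
  finally show False by simp
qed

lemma leximin_optimal_iff_saturated_and_fair:
  "leximin_optimal n m T st S v dt x \<longleftrightarrow> feas x \<and> saturated_and_fair x"
proof
  assume opt: "leximin_optimal n m T st S v dt x"
  then have fx: "feas x" by (simp add: leximin_optimal_def)
  moreover have "saturated_and_fair x"
  proof (rule ccontr)
    assume "\<not> saturated_and_fair x"
    then obtain y where "feas y" "elementary_improvement n (util x) (util y)"
      using improvement_if_not_saturated_and_fair[OF fx] by blast
    then show False
      using opt elementary_improvement_leximin_greater
      unfolding leximin_optimal_def utilities_def by blast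
  qed
  ultimately show "feas x \<and> saturated_and_fair x" ..
next
  assume x: "feas x \<and> saturated_and_fair x"
  have "\<not> leximin_greater (utilities n m T v dt y) (utilities n m T v dt x)" if fy: "feas y" for y
  proof
    assume "leximin_greater (utilities n m T v dt y) (utilities n m T v dt x)"
    moreover have "length (utilities n m T v dt x) = length (utilities n m T v dt y)"
      by (simp add: utilities_def)
    ultimately obtain c
      where "capped_sum c (utilities n m T v dt x) < capped_sum c (utilities n m T v dt y)"
      using leximin_greater_imp_capped_sum_less by blast
    then show False
      using saturated_and_fair_capped_sum_ge[OF _ _ fy, of x c] x
      by (simp add: utilities_def capped_sum_map_upt)
  qed
  then show "leximin_optimal n m T st S v dt x"
    using x unfolding leximin_optimal_def by blast
qed

lemma max_nash_welfare_iff_saturated_and_fair: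
  assumes "\<exists>z. feas z \<and> (\<forall>i<n. util z i > 0)"
  shows "max_nash_welfare n m T st S v dt x \<longleftrightarrow> feas x \<and> saturated_and_fair x"
proof
  assume mnw: "max_nash_welfare n m T st S v dt x"
  then have fx: "feas x" and x_pos: "\<forall>i<n. util x i > 0"
    by (auto simp: max_nash_welfare_def)
  have "saturated_and_fair x"
  proof (rule ccontr)
    assume "\<not> saturated_and_fair x"
    then obtain y where "feas y" "elementary_improvement n (util x) (util y)"
      using improvement_if_not_saturated_and_fair[OF fx] by blast
    with x_pos have "\<forall>i<n. util y i > 0" "(\<Sum>i<n. ln (util x i)) < (\<Sum>i<n. ln (util y i))"
      using elementary_improvement_ln_sum_less by blast+
    with \<open>feas y\<close> mnw show False
      unfolding max_nash_welfare_def by (meson not_le)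
  qed
  with fx show "feas x \<and> saturated_and_fair x" ..
next
  assume x: "feas x \<and> saturated_and_fair x"
  obtain z where "feas z" "\<forall>i<n. util z i > 0" using assms by blast
  then have "\<forall>i<n. util x i > 0" using x saturated_and_fair_utility_pos by blast
  with x show "max_nash_welfare n m T st S v dt x"
    unfolding max_nash_welfare_def using saturated_and_fair_ln_sum_ge by simp
qed

end

theorem theorem4:
  fixes n m T :: nat
    and st :: "nat \<Rightarrow> nat \<Rightarrow> real" and S :: "nat \<Rightarrow> real"
    and v :: "nat \<Rightarrow> nat \<Rightarrow> real" and dt :: "nat \<Rightarrow> nat \<Rightarrow> real"
  assumes st_nonneg: "\<forall>j<m. \<forall>t<T. st j t \<ge> 0"
    and S_nonneg: "\<forall>j<m. S j \<ge> 0"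
    and v_binary: "\<forall>i<n. \<forall>j<m. v i j \<in> {0, 1}"
    and dt_nonneg: "\<forall>i<n. \<forall>t<T. dt i t \<ge> 0"
    and pos: "\<exists>x. feasible n m T st S x \<and> (\<forall>i<n. utility m T v dt x i > 0)"
  shows "{x. leximin_optimal n m T st S v dt x} = {x. max_nash_welfare n m T st S v dt x}"
proof -
  interpret binary_market n m T st S v dt
    using v_binary by unfold_locales auto
  show ?thesis
    using leximin_optimal_iff_saturated_and_fair max_nash_welfare_iff_saturated_and_fair[OF pos]
    by blast
qed

end
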